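(* Let $M\in\mathrm{SL}(2,\mathbb{Z})$ and $n\in\mathbb{N}$. Then the reduction of $M$ mod $n$ is conjugate to its inverse within $\mathrm{GL}(2,\mathbb{Z}/n\mathbb{Z})$; hence the action of $M$ (mod $1$) on the lattice $L_n=\{x\in\mathbb{T}^2: nx\equiv0 \bmod 1\}$ of $n$-division points of the torus $\mathbb{T}^2=\mathbb{R}^2/\mathbb{Z}^2$ is reversible for all $n\in\mathbb{N}$. Moreover, if $\mathrm{mgcd}(M)=r\neq0$, then for every $n\in\mathbb{N}$ the reduction of $M$ mod $n$ possesses an involutory reversor, i.e. there is $R\in\mathrm{GL}(2,\mathbb{Z}/n\mathbb{Z})$ with $R^2=\mathbb{1}$ and $RMR^{-1}=M^{-1}$ over $\mathbb{Z}/n\mathbb{Z}$.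
   Context: For $M=\begin{pmatrix}a&b\\c&d\end{pmatrix}$, $\mathrm{mgcd}(M)=\gcd(b,c,d-a)$. An action is called reversible if it is conjugate to its inverse within the relevant group (here via an element of $\mathrm{GL}(2,\mathbb{Z}/n\mathbb{Z})$); a conjugating element is a reversor. *)

theory Defs
  imports "HOL-Analysis.Analysis" "HOL-Number_Theory.Number_Theory"
begin

text \<open>Integer 2x2 matrices are elements of int^2^2; entry (i,j) is A$i$j,
  so M = ((a,b),(c,d)) has a = M$1$1, b = M$1$2, c = M$2$1, d = M$2$2.
  Reduction mod n is modelled by entrywise congruence mod n.\<close>

definition mat_cong :: "nat \<Rightarrow> int^2^2 \<Rightarrow> int^2^2 \<Rightarrow> bool" where
  "mat_cong n A B \<longleftrightarrow> (\<forall>i j. [A$i$j = B$i$j] (mod int n))"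

definition gl_mod_pair :: "nat \<Rightarrow> int^2^2 \<Rightarrow> int^2^2 \<Rightarrow> bool" where
  "gl_mod_pair n R S \<longleftrightarrow> mat_cong n (R ** S) (mat 1) \<and> mat_cong n (S ** R) (mat 1)"

definition mgcd :: "int^2^2 \<Rightarrow> int" where
  "mgcd M = gcd (M$1$2) (gcd (M$2$1) (M$2$2 - M$1$1))"

text \<open>The lattice of n-division points of the torus R^2/Z^2, with points represented
  by their unique representatives in [0,1)^2.\<close>
definition torus_div_points :: "nat \<Rightarrow> (real^2) set" where
  "torus_div_points n = {x. \<forall>i. 0 \<le> x$i \<and> x$i < 1 \<and> real n * x$i \<in> \<int>}"

definition torus_act :: "int^2^2 \<Rightarrow> real^2 \<Rightarrow> real^2" where
  "torus_act A x = (\<chi> i. frac ((((\<chi> k l. real_of_int (A$k$l)) :: real^2^2) *v x) $ i))"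

end

theory Submission
  imports Defs
begin

text \<open>For x^2 + y z = 1 the matrix R = [[x, y], [z, -x]] is an involution, and for
  M = [[a, b], [c, d]] in SL(2,\<int>) one computes R M = M\<inverse> R + t \<one> with
  t = z b + y c - x (d - a). So R is an involutory reversor of M mod n, also of its action on
  the n-division points, as soon as n divides t. After dividing (b, c, d - a) by its gcd, take
  for R the conjugates of [[1, 0], [k, -1]] by a fixed P \<in> SL(2,\<int>): then t is affine in k,
  with slope the value of the primitive binary form b X^2 - (d - a) X Y - c Y^2 at the
  coprime pair that P is built from. A primitive form takes a value prime to n at some coprime
  pair, and for that choice k can be solved for.\<close>

lemma coprime_if_no_common_prime_divisor:
  fixes a b :: int
  assumes "b \<noteq> 0" and "\<And>p. prime p \<Longrightarrow> p dvd a \<Longrightarrow> p dvd b \<Longrightarrow> False"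
  shows "coprime a b"
proof (rule ccontr)
  assume "\<not> coprime a b"
  then have "\<not> is_unit (gcd a b)" and "gcd a b \<noteq> 0"
    using is_unit_gcd[of a b] assms(1) by auto
  then obtain p where "prime p" "p dvd gcd a b" using prime_divisorE by blast
  then show False using assms(2) by auto
qed

lemma prime_dvd_prod_primes_iff:
  fixes S :: "int set"
  assumes "finite S" "\<forall>q\<in>S. prime q" "prime p"
  shows "p dvd \<Prod>S \<longleftrightarrow> p \<in> S"
  using assms prime_dvd_prod_iff[OF assms(1) assms(3), of id] primes_dvd_imp_eq
  by (auto intro: dvd_prodI)

text \<open>X collects the primes of n dividing \<alpha> but not \<gamma>, Y those not dividing \<alpha>;
  then for every prime p of n exactly one of the three terms of the form is prime to p.\<close>
lemma primitive_form_represents_coprime: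
  fixes \<alpha> \<beta> \<gamma> :: int and n :: nat
  assumes "n > 0" and primitive: "gcd \<alpha> (gcd \<beta> \<gamma>) = 1"
  shows "\<exists>X Y. coprime X Y \<and> coprime (\<alpha>*X^2 + \<beta>*X*Y + \<gamma>*Y^2) (int n)"
proof -
  define P where "P = prime_factors (int n)"
  have "finite P" by (simp add: P_def)
  define SX where "SX = {p\<in>P. p dvd \<alpha> \<and> \<not> p dvd \<gamma>}"
  define SY where "SY = {p\<in>P. \<not> p dvd \<alpha>}"
  define X where "X = \<Prod>SX"
  define Y where "Y = \<Prod>SY"
  have "finite SX" "finite SY" "\<forall>q\<in>SX. prime q" "\<forall>q\<in>SY. prime q"
    using \<open>finite P\<close> by (auto simp: SX_def SY_def P_def in_prime_factors_iff)
  then have dvd_X: "p dvd X \<longleftrightarrow> p \<in> SX" and dvd_Y: "p dvd Y \<longleftrightarrow> p \<in> SY" if "prime p" for p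
    using prime_dvd_prod_primes_iff that by (simp_all add: X_def Y_def)
  have "Y \<noteq> 0"
    using \<open>finite SY\<close> \<open>\<forall>q\<in>SY. prime q\<close> by (auto simp: Y_def prod_zero_iff)
  then have "coprime X Y"
    by (rule coprime_if_no_common_prime_divisor) (auto simp: dvd_X dvd_Y SX_def SY_def)
  moreover have "coprime (\<alpha>*X^2 + \<beta>*X*Y + \<gamma>*Y^2) (int n)"
  proof (rule coprime_if_no_common_prime_divisor)
    fix p :: int
    assume p: "prime p" and dvd_form: "p dvd \<alpha>*X^2 + \<beta>*X*Y + \<gamma>*Y^2" and "p dvd int n"
    then have "p \<in> P" using \<open>n > 0\<close> by (simp add: P_def in_prime_factors_iff)
    consider "\<not> p dvd \<alpha>" | "p dvd \<alpha>" "\<not> p dvd \<gamma>" | "p dvd \<alpha>" "p dvd \<gamma>" by blast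
    then show False
    proof cases
      case 1
      then have "p dvd Y" "\<not> p dvd X" using dvd_X dvd_Y p \<open>p \<in> P\<close> by (auto simp: SX_def SY_def)
      then have "p dvd \<alpha>*X^2" using dvd_diff[OF dvd_form, of "\<beta>*X*Y + \<gamma>*Y^2"]
        by (simp add: power2_eq_square)
      then show False using 1 \<open>\<not> p dvd X\<close> p by (simp add: prime_dvd_mult_iff prime_dvd_power_iff)
    next
      case 2
      then have "p dvd X" "\<not> p dvd Y" using dvd_X dvd_Y p \<open>p \<in> P\<close> by (auto simp: SX_def SY_def)
      then have "p dvd \<gamma>*Y^2" using dvd_diff[OF dvd_form, of "\<alpha>*X^2 + \<beta>*X*Y"]
        by (simp add: power2_eq_square)
      then show False using 2 \<open>\<not> p dvd Y\<close> p by (simp add: prime_dvd_mult_iff prime_dvd_power_iff)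
    next
      case 3
      then have "\<not> p dvd X" "\<not> p dvd Y" using dvd_X dvd_Y p \<open>p \<in> P\<close> by (auto simp: SX_def SY_def)
      have "p dvd \<beta>*X*Y" using 3 dvd_diff[OF dvd_form, of "\<alpha>*X^2 + \<gamma>*Y^2"] by simp
      then have "p dvd gcd \<alpha> (gcd \<beta> \<gamma>)"
        using 3 \<open>\<not> p dvd X\<close> \<open>\<not> p dvd Y\<close> p by (simp add: prime_dvd_mult_iff)
      then have "p dvd 1" using primitive by simp
      then show False using p not_prime_unit by blast
    qed
  qed (use \<open>n > 0\<close> in simp)
  ultimately show ?thesis by blast
qed

lemma involution_condition_solvable_primitive:
  fixes b c e :: int and n :: nat
  assumes "n > 0" and primitive: "gcd b (gcd c e) = 1"
  shows "\<exists>x y z. x^2 + y * z = 1 \<and> int n dvd z * b + y * c - x * e"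
proof -
  have "gcd b (gcd (-e) (-c)) = 1" using primitive by (simp add: gcd.commute)
  from primitive_form_represents_coprime[OF \<open>n > 0\<close> this] obtain s q where
    "coprime s q" and "coprime (b * s^2 + (-e) * s * q + (-c) * q^2) (int n)" by blast
  define w where "w = b * s^2 - e * s * q - c * q^2"
  have "coprime w (int n)" using \<open>coprime (b * s^2 + _ + _) _\<close> by (simp add: w_def)
  then obtain u v where uv: "u * w + v * int n = 1"
    using bezout_int[of w "int n"] by (auto simp: coprime_iff_gcd_eq_1)
  obtain p r' where "p * s + r' * q = 1"
    using bezout_int[of s q] \<open>coprime s q\<close> by (auto simp: coprime_iff_gcd_eq_1 algebra_simps)
  define r where "r = - r'"
  have "p * s - q * r = 1" using \<open>p * s + r' * q = 1\<close> by (simp add: r_def algebra_simps)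
  define h where "h = 2 * r * s * b - (p * s + q * r) * e - 2 * p * q * c"
  define t where "t = - h * u"
  \<comment> \<open>(x, y, z) is read off [[p, q], [r, s]] [[1, 0], [t, -1]] [[p, q], [r, s]]\<inverse>\<close>
  define x where "x = p * s + q * r + q * s * t"
  define y where "y = - (2 * p * q + q^2 * t)"
  define z where "z = 2 * r * s + s^2 * t"
  have "x^2 + y * z = (p * s - q * r)^2"
    unfolding x_def y_def z_def by (simp add: power2_eq_square algebra_simps)
  also have "\<dots> = 1" using \<open>p * s - q * r = 1\<close> by simp
  finally have "x^2 + y * z = 1" .
  have "z * b + y * c - x * e = t * w + h"
    unfolding x_def y_def z_def w_def h_def by (simp add: power2_eq_square algebra_simps)
  also have "\<dots> = h * (1 - u * w)" by (simp add: t_def algebra_simps)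
  also have "1 - u * w = v * int n" using uv by simp
  finally have "z * b + y * c - x * e = h * (v * int n)" .
  then have "int n dvd z * b + y * c - x * e" by simp
  with \<open>x^2 + y * z = 1\<close> show ?thesis by blast
qed

lemma involution_condition_solvable:
  fixes b c e :: int and n :: nat
  assumes "n > 0"
  shows "\<exists>x y z. x^2 + y * z = 1 \<and> int n dvd z * b + y * c - x * e"
proof (cases "gcd b (gcd c e) = 0")
  case True
  then show ?thesis by (intro exI[of _ 1] exI[of _ 0]) simp
next
  case False
  define g where "g = gcd b (gcd c e)"
  obtain b' c' e' where b: "b = g * b'" and c: "c = g * c'" and e: "e = g * e'"
    unfolding g_def by (meson dvdE gcd_dvd1 gcd_dvd2 dvd_trans)
  have "g \<ge> 0" by (simp add: g_def)
  then have "gcd b (gcd c e) = g * gcd b' (gcd c' e')"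
    unfolding b c e by (simp add: gcd_mult_left)
  then have "gcd b' (gcd c' e') = 1" using False unfolding g_def[symmetric] by simp
  from involution_condition_solvable_primitive[OF \<open>n > 0\<close> this] obtain x y z
    where "x^2 + y * z = 1" "int n dvd z * b' + y * c' - x * e'" by blast
  moreover have "z * b + y * c - x * e = g * (z * b' + y * c' - x * e')"
    unfolding b c e by (simp add: algebra_simps)
  ultimately have "int n dvd z * b + y * c - x * e" by simp
  with \<open>x^2 + y * z = 1\<close> show ?thesis by blast
qed

lemma matrix_matrix_mult_2:
  "((A::'a::comm_ring_1^2^2) ** B)$i$j = A$i$1 * B$1$j + A$i$2 * B$2$j"
  by (simp add: matrix_matrix_mult_def sum_2)

lemma mat2_eq_iff:
  "(A::'a^2^2) = B \<longleftrightarrow> A$1$1 = B$1$1 \<and> A$1$2 = B$1$2 \<and> A$2$1 = B$2$1 \<and> A$2$2 = B$2$2"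
  by (simp add: vec_eq_iff forall_2)

lemma matrix_inv_2:
  fixes M :: "'a::comm_ring_1^2^2"
  assumes "det M = 1"
  shows "matrix_inv M = vector [vector [M$2$2, - M$1$2], vector [- M$2$1, M$1$1]]"
proof -
  define A where "A = (vector [vector [M$2$2, - M$1$2], vector [- M$2$1, M$1$1]] :: 'a^2^2)"
  have "M$1$1 * M$2$2 - M$1$2 * M$2$1 = 1" using assms by (simp add: det_2)
  then have MA: "M ** A = mat 1" and AM: "A ** M = mat 1"
    unfolding mat2_eq_iff matrix_matrix_mult_2 by (simp_all add: A_def mat_def algebra_simps)
  have inv: "M ** matrix_inv M = mat 1 \<and> matrix_inv M ** M = mat 1"
    unfolding matrix_inv_def by (rule someI[of _ A]) (use MA AM in blast)
  have "matrix_inv M = (A ** M) ** matrix_inv M" by (simp add: AM matrix_mul_lid)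
  also have "\<dots> = A ** (M ** matrix_inv M)" by (simp add: matrix_mul_assoc)
  also have "\<dots> = A" using inv by (simp add: matrix_mul_rid)
  finally show ?thesis unfolding A_def .
qed

lemma traceless_matrix_2_square:
  fixes x y z :: "'a::comm_ring_1"
  defines "R \<equiv> vector [vector [x, y], vector [z, - x]] :: 'a^2^2"
  shows "R ** R = mat (x^2 + y * z)"
  unfolding mat2_eq_iff
  by (simp add: R_def matrix_matrix_mult_2 mat_def power2_eq_square algebra_simps)

lemma traceless_matrix_2_twisted_commute:
  fixes M :: "'a::comm_ring_1^2^2" and x y z :: 'a
  defines "R \<equiv> vector [vector [x, y], vector [z, - x]] :: 'a^2^2"
  assumes "det M = 1"
  shows "R ** M = matrix_inv M ** R + mat (z * M$1$2 + y * M$2$1 - x * (M$2$2 - M$1$1))"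
  unfolding matrix_inv_2[OF \<open>det M = 1\<close>] mat2_eq_iff
  by (simp add: R_def matrix_matrix_mult_2 mat_def algebra_simps)

lemma mat_cong_mult_right:
  fixes A B C :: "int^2^2"
  assumes "mat_cong n A B"
  shows "mat_cong n (A ** C) (B ** C)"
  using assms unfolding mat_cong_def matrix_matrix_mult_def
  by (auto intro!: cong_sum cong_mult)

lemma mat_cong_add_mat:
  fixes A :: "int^2^2"
  assumes "int n dvd t"
  shows "mat_cong n (A + mat t) A"
  using assms by (simp add: mat_cong_def mat_def cong_iff_dvd_diff)

lemma torus_act_component:
  "torus_act A x $ i = frac (of_int (A$i$1) * x$1 + of_int (A$i$2) * x$2)"
  by (simp add: torus_act_def matrix_vector_mult_def sum_2)

lemma frac_eq_if_diff_Ints: "x - y \<in> \<int> \<Longrightarrow> frac x = frac (y::real)"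
  using frac_add_int_right[of "x - y" y] by (simp add: add.commute)

lemma torus_act_matrix_mult: "torus_act A (torus_act B x) = torus_act (A ** B) x"
proof -
  have "torus_act A (torus_act B x) $ i = torus_act (A ** B) x $ i" for i
  proof -
    define u where "u = of_int (B$1$1) * x$1 + of_int (B$1$2) * x$2"
    define v where "v = of_int (B$2$1) * x$1 + of_int (B$2$2) * x$2"
    have "of_int (A$i$1) * frac u + of_int (A$i$2) * frac v
            - (of_int ((A ** B)$i$1) * x$1 + of_int ((A ** B)$i$2) * x$2)
          = of_int (- A$i$1 * \<lfloor>u\<rfloor> - A$i$2 * \<lfloor>v\<rfloor>)"
      by (simp add: matrix_matrix_mult_2 frac_def u_def v_def algebra_simps)
    then show ?thesis
      unfolding torus_act_component u_def[symmetric] v_def[symmetric]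
      by (intro frac_eq_if_diff_Ints) (metis Ints_of_int)
  qed
  then show ?thesis by (simp add: vec_eq_iff)
qed

lemma torus_act_in_div_points:
  assumes "x \<in> torus_div_points n"
  shows "torus_act A x \<in> torus_div_points n"
proof -
  have "real n * torus_act A x $ i \<in> \<int>" for i
  proof -
    define u where "u = of_int (A$i$1) * x$1 + of_int (A$i$2) * x$2"
    have "real n * x$1 \<in> \<int>" "real n * x$2 \<in> \<int>"
      using assms unfolding torus_div_points_def by auto
    then obtain k l where kl: "real n * x$1 = of_int k" "real n * x$2 = of_int l"
      by (elim Ints_cases)
    have "real n * torus_act A x $ i = real n * u - real n * of_int \<lfloor>u\<rfloor>"
      by (simp add: torus_act_component u_def frac_def right_diff_distrib)
    also have "real n * u = of_int (A$i$1) * (real n * x$1) + of_int (A$i$2) * (real n * x$2)"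
      by (simp add: u_def algebra_simps)
    also have "\<dots> = of_int (A$i$1 * k + A$i$2 * l)" using kl by simp
    finally have "real n * torus_act A x $ i = of_int (A$i$1 * k + A$i$2 * l - int n * \<lfloor>u\<rfloor>)"
      by simp
    then show ?thesis by (metis Ints_of_int)
  qed
  then show ?thesis
    unfolding torus_div_points_def by (simp add: torus_act_component frac_lt_1)
qed

lemma torus_act_mat_1:
  assumes "x \<in> torus_div_points n"
  shows "torus_act (mat 1) x = x"
proof -
  have "torus_act (mat 1) x $ i = frac (x $ i)" for i
    unfolding torus_act_component using exhaust_2[of i] by (auto simp: mat_def)
  moreover have "0 \<le> x$i \<and> x$i < 1" for i
    using assms unfolding torus_div_points_def by auto
  ultimately show ?thesis by (simp add: vec_eq_iff frac_eq)
qed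

lemma torus_act_mat_cong:
  assumes "mat_cong n A B" and "x \<in> torus_div_points n"
  shows "torus_act A x = torus_act B x"
proof -
  have "torus_act A x $ i = torus_act B x $ i" for i
  proof -
    obtain k l where "A$i$1 - B$i$1 = int n * k" "A$i$2 - B$i$2 = int n * l"
      using assms(1) unfolding mat_cong_def cong_iff_dvd_diff by (metis dvd_def)
    then have "of_int (A$i$1) * x$1 + of_int (A$i$2) * x$2 - (of_int (B$i$1) * x$1 + of_int (B$i$2) * x$2)
        = of_int k * (real n * x$1) + of_int l * (real n * x$2)"
      by (simp add: algebra_simps flip: of_int_diff)
    also have "\<dots> \<in> \<int>"
      using assms(2) unfolding torus_div_points_def by (auto intro: Ints_add Ints_mult)
    finally show ?thesis unfolding torus_act_component by (rule frac_eq_if_diff_Ints)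
  qed
  then show ?thesis by (simp add: vec_eq_iff)
qed

lemma bij_betw_torus_act:
  assumes "gl_mod_pair n R S"
  shows "bij_betw (torus_act R) (torus_div_points n) (torus_div_points n)"
proof (rule bij_betw_byWitness[where f' = "torus_act S"])
  have "torus_act S (torus_act R x) = x" "torus_act R (torus_act S x) = x"
    if "x \<in> torus_div_points n" for x
    using assms that unfolding gl_mod_pair_def torus_act_matrix_mult
    by (metis torus_act_mat_1 torus_act_mat_cong)+
  then show "\<forall>x\<in>torus_div_points n. torus_act S (torus_act R x) = x"
    "\<forall>x\<in>torus_div_points n. torus_act R (torus_act S x) = x" by auto
qed (auto intro: torus_act_in_div_points)

theorem theorem4p2:
  fixes M :: "int^2^2" and n :: nat
  assumes SL: "det M = 1" and n_pos: "n > 0"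
  shows "(\<exists>R S. gl_mod_pair n R S \<and> mat_cong n (R ** M ** S) (matrix_inv M))
       \<and> (\<exists>R S. gl_mod_pair n R S
            \<and> bij_betw (torus_act R) (torus_div_points n) (torus_div_points n)
            \<and> (\<forall>x\<in>torus_div_points n.
                 torus_act R (torus_act M x) = torus_act (matrix_inv M) (torus_act R x)))
       \<and> (mgcd M \<noteq> 0 \<longrightarrow>
            (\<exists>R S. gl_mod_pair n R S \<and> mat_cong n (R ** R) (mat 1)
                   \<and> mat_cong n (R ** M ** S) (matrix_inv M)))"
proof -
  obtain x y z where "x^2 + y * z = 1" and
    n_dvd: "int n dvd z * M$1$2 + y * M$2$1 - x * (M$2$2 - M$1$1)"
    using involution_condition_solvable[OF n_pos] by blast
  define R where "R = (vector [vector [x, y], vector [z, - x]] :: int^2^2)"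
  have RR: "R ** R = mat 1"
    using traceless_matrix_2_square[of x y z] \<open>x^2 + y * z = 1\<close> by (simp add: R_def)
  then have RR_cong: "mat_cong n (R ** R) (mat 1)" by (simp add: mat_cong_def)
  then have gl: "gl_mod_pair n R R" by (simp add: gl_mod_pair_def)
  have "mat_cong n (R ** M) (matrix_inv M ** R)"
    unfolding R_def traceless_matrix_2_twisted_commute[OF SL] using n_dvd by (rule mat_cong_add_mat)
  then have torus: "torus_act R (torus_act M v) = torus_act (matrix_inv M) (torus_act R v)"
    if "v \<in> torus_div_points n" for v
    using that by (simp add: torus_act_matrix_mult torus_act_mat_cong)
  have "mat_cong n (R ** M ** R) (matrix_inv M ** R ** R)"
    by (rule mat_cong_mult_right) fact
  also have "matrix_inv M ** R ** R = matrix_inv M"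
    by (simp add: matrix_mul_assoc[symmetric] RR)
  finally have "mat_cong n (R ** M ** R) (matrix_inv M)" .
  \<comment> \<open>the same R serves all three claims\<close>
  then show ?thesis
    using gl RR_cong torus bij_betw_torus_act[OF gl] by blast
qed

end
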